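(* Let $X$ be a set. For every directed pseudo-metric $d$ on $\mathcal P(X)$, $\alpha_T(\gamma_T(d))$ is the greatest directed pseudo-metric $d'$ on $\mathcal P(X)$ such that $d'\le d$ and $d'$ is join-preserving in its first argument.
   Context: $r\oplus s=\min\{r+s,1\}$, $r\ominus s=\max\{0,r-s\}$. A directed pseudo-metric on $Y$ is $d\colon Y\times Y\to[0,1]$ with $d(y,y)=0$ and $d(x,z)\le d(x,y)\oplus d(y,z)$. $d'$ on $\mathcal P(X)$ is join-preserving in its first argument if $d'(\bigcup_iX_i,Y)=\bigvee_id'(X_i,Y)$ for all families (empty join $=0$). For $f\colon X\to[0,1]$, $\tilde f(Y)=\bigvee_{x\in Y}f(x)$. $\alpha_T(\mathcal F)(X_1,X_2)=\bigvee_{f\in\mathcal F}(\tilde f(X_1)\ominus\tilde f(X_2))$ for $\mathcal F\subseteq[0,1]^X$; $\gamma_T(d)=\{f\in[0,1]^X\mid\forall X_1,X_2\subseteq X\colon\tilde f(X_1)\ominus\tilde f(X_2)\le d(X_1,X_2)\}$. *)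

theory Defs
  imports Main "HOL.Real"
begin

definition tplus :: "real \<Rightarrow> real \<Rightarrow> real" where
  "tplus r s = min (r + s) 1"

definition tminus :: "real \<Rightarrow> real \<Rightarrow> real" where
  "tminus r s = max 0 (r - s)"

definition join01 :: "real set \<Rightarrow> real" where
  "join01 A = (if A = {} then 0 else Sup A)"

definition directed_pseudo_metric :: "('y \<Rightarrow> 'y \<Rightarrow> real) \<Rightarrow> bool" where
  "directed_pseudo_metric d \<longleftrightarrow>
     (\<forall>x y. 0 \<le> d x y \<and> d x y \<le> 1) \<and>
     (\<forall>y. d y y = 0) \<and>
     (\<forall>x y z. d x z \<le> tplus (d x y) (d y z))"

definition join_preserving_fst :: "('a set \<Rightarrow> 'a set \<Rightarrow> real) \<Rightarrow> bool" where
  "join_preserving_fst d \<longleftrightarrow>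
     (\<forall>(S :: 'a set set) Y. d (\<Union>S) Y = join01 ((\<lambda>Xi. d Xi Y) ` S))"

definition lift_sup :: "('a \<Rightarrow> real) \<Rightarrow> 'a set \<Rightarrow> real" where
  "lift_sup f Y = join01 (f ` Y)"

definition alphaT :: "('a \<Rightarrow> real) set \<Rightarrow> 'a set \<Rightarrow> 'a set \<Rightarrow> real" where
  "alphaT F X1 X2 = join01 ((\<lambda>f. tminus (lift_sup f X1) (lift_sup f X2)) ` F)"

definition gammaT :: "('a set \<Rightarrow> 'a set \<Rightarrow> real) \<Rightarrow> ('a \<Rightarrow> real) set" where
  "gammaT d = {f. (\<forall>x. 0 \<le> f x \<and> f x \<le> 1) \<and>
      (\<forall>X1 X2. tminus (lift_sup f X1) (lift_sup f X2) \<le> d X1 X2)}"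

end

theory Submission
  imports Defs
begin

text \<open>
  The functions of \<open>gammaT d\<close> are exactly the \<open>[0,1]\<close>-valued \<open>f\<close> whose lifting
  \<open>lift_sup f\<close> is non-expansive from \<open>d\<close> to the truncated difference on \<open>[0,1]\<close>.
  Hence \<open>alphaT (gammaT d)\<close> is below \<open>d\<close>; it is a directed pseudo-metric and
  join-preserving because each \<open>lift_sup f\<close> turns unions into joins and truncated
  subtraction of a constant commutes with joins.  For maximality, a join-preserving
  directed pseudo-metric \<open>d' \<le> d\<close> is recovered from the single function
  \<open>f x = d' {x} Y\<close>: join preservation gives \<open>lift_sup f X = d' X Y\<close>, and the
  triangle inequality puts \<open>f\<close> into \<open>gammaT d\<close>.
\<close>

lemma join01_le_iff:
  assumes "A \<subseteq> {0..1}" "0 \<le> c"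
  shows "join01 A \<le> c \<longleftrightarrow> (\<forall>a\<in>A. a \<le> c)"
proof (cases "A = {}")
  case False
  moreover have "bdd_above A" using bdd_above_mono[OF bdd_above_Icc assms(1)] .
  ultimately show ?thesis by (simp add: join01_def cSup_le_iff)
qed (use assms in \<open>simp add: join01_def\<close>)

lemma join01_upper:
  assumes "A \<subseteq> {0..1}" "a \<in> A"
  shows "a \<le> join01 A"
proof -
  have "bdd_above A" using bdd_above_mono[OF bdd_above_Icc assms(1)] .
  then show ?thesis using assms(2) by (auto simp add: join01_def intro: cSup_upper)
qed

lemma join01_in_unit:
  assumes "A \<subseteq> {0..1}"
  shows "join01 A \<in> {0..1}"
proof (cases "A = {}")
  case False
  then obtain a where "a \<in> A" by blast
  then have "0 \<le> join01 A" using assms join01_upper[OF assms] by force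
  moreover have "join01 A \<le> 1" using assms by (subst join01_le_iff) auto
  ultimately show ?thesis by simp
qed (simp add: join01_def)

lemma join01_Union:
  assumes "\<Union>S \<subseteq> {0..1}"
  shows "join01 (\<Union>S) = join01 (join01 ` S)"
proof -
  have S_unit: "A \<subseteq> {0..1}" if "A \<in> S" for A using assms that by blast
  have joins_unit: "join01 ` S \<subseteq> {0..1}" using S_unit join01_in_unit by blast
  have "join01 (\<Union>S) \<le> join01 (join01 ` S)"
  proof (subst join01_le_iff[OF assms], use join01_in_unit[OF joins_unit] in simp, intro ballI)
    fix a assume "a \<in> \<Union>S"
    then obtain A where "A \<in> S" "a \<in> A" by blast
    then have "a \<le> join01 A" using S_unit join01_upper by blast
    also have "\<dots> \<le> join01 (join01 ` S)" using \<open>A \<in> S\<close> joins_unit join01_upper by blast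
    finally show "a \<le> join01 (join01 ` S)" .
  qed
  moreover have "join01 (join01 ` S) \<le> join01 (\<Union>S)"
    using assms S_unit joins_unit join01_in_unit[OF assms]
    by (auto simp: join01_le_iff intro: join01_upper)
  ultimately show ?thesis by linarith
qed

lemma join01_swap:
  assumes "\<And>i j. i \<in> I \<Longrightarrow> j \<in> J \<Longrightarrow> g i j \<in> {0..1}"
  shows "join01 ((\<lambda>i. join01 ((\<lambda>j. g i j) ` J)) ` I)
       = join01 ((\<lambda>j. join01 ((\<lambda>i. g i j) ` I)) ` J)"
proof -
  have "join01 ((\<lambda>i. join01 ((\<lambda>j. g i j) ` J)) ` I) = join01 (\<Union>i\<in>I. (\<lambda>j. g i j) ` J)"
    using join01_Union[of "(\<lambda>i. (\<lambda>j. g i j) ` J) ` I"] assms by (force simp: image_image)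
  also have "(\<Union>i\<in>I. (\<lambda>j. g i j) ` J) = (\<Union>j\<in>J. (\<lambda>i. g i j) ` I)" by blast
  also have "join01 \<dots> = join01 ((\<lambda>j. join01 ((\<lambda>i. g i j) ` I)) ` J)"
    using join01_Union[of "(\<lambda>j. (\<lambda>i. g i j) ` I) ` J"] assms by (force simp: image_image)
  finally show ?thesis .
qed

lemma tminus_triangle: "tminus a c \<le> tminus a b + tminus b c"
  unfolding tminus_def by linarith

lemma tminus_join01:
  assumes "A \<subseteq> {0..1}" "0 \<le> c"
  shows "tminus (join01 A) c = join01 ((\<lambda>a. tminus a c) ` A)"
proof -
  let ?R = "join01 ((\<lambda>a. tminus a c) ` A)"
  have shifted_unit: "(\<lambda>a. tminus a c) ` A \<subseteq> {0..1}"
    using assms by (auto simp: tminus_def)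
  have R_unit: "?R \<in> {0..1}" using join01_in_unit[OF shifted_unit] .
  have "join01 A \<le> ?R + c"
  proof (subst join01_le_iff[OF assms(1)], use R_unit assms(2) in simp, intro ballI)
    fix a assume "a \<in> A"
    then have "tminus a c \<le> ?R" using shifted_unit join01_upper by blast
    then show "a \<le> ?R + c" unfolding tminus_def by linarith
  qed
  then have "tminus (join01 A) c \<le> ?R" using R_unit unfolding tminus_def by simp
  moreover have "?R \<le> tminus (join01 A) c"
  proof (subst join01_le_iff[OF shifted_unit])
    show "0 \<le> tminus (join01 A) c" by (simp add: tminus_def)
    have "tminus a c \<le> tminus (join01 A) c" if "a \<in> A" for a
      using join01_upper[OF assms(1) that] by (simp add: tminus_def)
    then show "\<forall>b\<in>(\<lambda>a. tminus a c) ` A. b \<le> tminus (join01 A) c" by blast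
  qed
  ultimately show ?thesis by linarith
qed

lemma lift_sup_in_unit: "range f \<subseteq> {0..1} \<Longrightarrow> lift_sup f X \<in> {0..1}"
  unfolding lift_sup_def by (rule join01_in_unit) blast

lemma lift_sup_Union:
  assumes "range f \<subseteq> {0..1}"
  shows "lift_sup f (\<Union>S) = join01 ((\<lambda>X. lift_sup f X) ` S)"
  using join01_Union[of "(\<lambda>X. f ` X) ` S"] assms
  by (force simp: lift_sup_def image_Union image_image)

lemma join_preserving_fst_lift_sup:
  assumes "join_preserving_fst d"
  shows "lift_sup (\<lambda>x. d {x} Y) X = d X Y"
  using assms[unfolded join_preserving_fst_def, rule_format, of "(\<lambda>x. {x}) ` X" Y]
  by (simp add: lift_sup_def image_image)

lemma directed_pseudo_metric_tminus_le:
  assumes "directed_pseudo_metric d"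
  shows "tminus (d X Z) (d Y Z) \<le> d X Y"
proof -
  have "d X Z \<le> tplus (d X Y) (d Y Z)" "0 \<le> d X Y"
    using assms by (simp_all add: directed_pseudo_metric_def)
  then show ?thesis by (simp add: tplus_def tminus_def)
qed

lemma tminus_lift_sup_in_unit:
  assumes "range f \<subseteq> {0..1}"
  shows "tminus (lift_sup f X) (lift_sup f Y) \<in> {0..1}"
  using lift_sup_in_unit[OF assms, of X] lift_sup_in_unit[OF assms, of Y]
  by (simp add: tminus_def)

context
  fixes F :: "('a \<Rightarrow> real) set"
  assumes unit_valued: "\<forall>f\<in>F. range f \<subseteq> {0..1}"
begin

lemma alphaT_terms_unit: "(\<lambda>f. tminus (lift_sup f X) (lift_sup f Y)) ` F \<subseteq> {0..1}"
  using unit_valued by (auto intro: tminus_lift_sup_in_unit)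

lemma alphaT_in_unit: "alphaT F X Y \<in> {0..1}"
  unfolding alphaT_def using alphaT_terms_unit by (rule join01_in_unit)

lemma alphaT_upper: "f \<in> F \<Longrightarrow> tminus (lift_sup f X) (lift_sup f Y) \<le> alphaT F X Y"
  unfolding alphaT_def by (rule join01_upper[OF alphaT_terms_unit imageI])

lemma alphaT_le_iff:
  "0 \<le> c \<Longrightarrow> alphaT F X Y \<le> c \<longleftrightarrow> (\<forall>f\<in>F. tminus (lift_sup f X) (lift_sup f Y) \<le> c)"
  unfolding alphaT_def by (simp add: join01_le_iff[OF alphaT_terms_unit])

lemma directed_pseudo_metric_alphaT: "directed_pseudo_metric (alphaT F)"
  unfolding directed_pseudo_metric_def
proof (intro conjI allI)
  fix X Y show "0 \<le> alphaT F X Y" "alphaT F X Y \<le> 1" using alphaT_in_unit by auto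
next
  fix Y show "alphaT F Y Y = 0"
    using alphaT_le_iff[of 0 Y Y] alphaT_in_unit[of Y Y] by (simp add: tminus_def)
next
  fix X Y Z
  have "tminus (lift_sup f X) (lift_sup f Z) \<le> min (alphaT F X Y + alphaT F Y Z) 1"
    if "f \<in> F" for f
  proof -
    have "tminus (lift_sup f X) (lift_sup f Z)
        \<le> tminus (lift_sup f X) (lift_sup f Y) + tminus (lift_sup f Y) (lift_sup f Z)"
      by (rule tminus_triangle)
    also have "\<dots> \<le> alphaT F X Y + alphaT F Y Z"
      using alphaT_upper[OF that, of X Y] alphaT_upper[OF that, of Y Z] by (rule add_mono)
    finally show ?thesis
      using tminus_lift_sup_in_unit[of f X Z] unit_valued that by simp
  qed
  moreover have "0 \<le> min (alphaT F X Y + alphaT F Y Z) 1" using alphaT_in_unit by auto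
  ultimately show "alphaT F X Z \<le> tplus (alphaT F X Y) (alphaT F Y Z)"
    unfolding tplus_def by (simp add: alphaT_le_iff)
qed

lemma join_preserving_fst_alphaT: "join_preserving_fst (alphaT F)"
  unfolding join_preserving_fst_def
proof (intro allI)
  fix S :: "'a set set" and Y
  have terms_Union: "tminus (lift_sup f (\<Union>S)) (lift_sup f Y)
      = join01 ((\<lambda>X. tminus (lift_sup f X) (lift_sup f Y)) ` S)" if "f \<in> F" for f
  proof -
    have f_unit: "range f \<subseteq> {0..1}" using unit_valued that by blast
    have "lift_sup f ` S \<subseteq> {0..1}" "0 \<le> lift_sup f Y"
      using lift_sup_in_unit[OF f_unit] by auto
    then show ?thesis
      unfolding lift_sup_Union[OF f_unit] by (subst tminus_join01) (simp_all add: image_image)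
  qed
  then have "alphaT F (\<Union>S) Y
      = join01 ((\<lambda>f. join01 ((\<lambda>X. tminus (lift_sup f X) (lift_sup f Y)) ` S)) ` F)"
    unfolding alphaT_def by (simp add: terms_Union cong: image_cong)
  also have "\<dots> = join01 ((\<lambda>X. alphaT F X Y) ` S)"
    unfolding alphaT_def
  proof (rule join01_swap[of F S "\<lambda>f X. tminus (lift_sup f X) (lift_sup f Y)"])
    fix f X assume "f \<in> F"
    then show "tminus (lift_sup f X) (lift_sup f Y) \<in> {0..1}"
      using unit_valued by (intro tminus_lift_sup_in_unit) blast
  qed
  finally show "alphaT F (\<Union>S) Y = join01 ((\<lambda>X. alphaT F X Y) ` S)" .
qed

end

lemma gammaT_unit_valued: "\<forall>f\<in>gammaT d. range f \<subseteq> {0..1}"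
  by (auto simp: gammaT_def)

lemma alphaT_gammaT_le:
  assumes "0 \<le> d X Y"
  shows "alphaT (gammaT d) X Y \<le> d X Y"
  using assms by (subst alphaT_le_iff[OF gammaT_unit_valued]) (auto simp: gammaT_def)

lemma le_alphaT_gammaT:
  assumes "directed_pseudo_metric d'" "join_preserving_fst d'" "\<And>X Y. d' X Y \<le> d X Y"
  shows "d' X Y \<le> alphaT (gammaT d) X Y"
proof -
  define f where "f x = d' {x} Y" for x
  have lift_f: "lift_sup f Z = d' Z Y" for Z
    unfolding f_def using assms(2) by (rule join_preserving_fst_lift_sup)
  have "f \<in> gammaT d"
  proof -
    have "0 \<le> f x \<and> f x \<le> 1" for x
      using assms(1) by (simp add: f_def directed_pseudo_metric_def)
    moreover have "tminus (lift_sup f X1) (lift_sup f X2) \<le> d X1 X2" for X1 X2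
      unfolding lift_f using directed_pseudo_metric_tminus_le[OF assms(1)] assms(3) order_trans by blast
    ultimately show ?thesis by (simp add: gammaT_def)
  qed
  moreover have "d' X Y = tminus (lift_sup f X) (lift_sup f Y)"
    using assms(1) by (simp add: lift_f tminus_def directed_pseudo_metric_def)
  ultimately show ?thesis using alphaT_upper[OF gammaT_unit_valued] by simp
qed

theorem mainTheorem16:
  fixes d :: "'a set \<Rightarrow> 'a set \<Rightarrow> real"
  assumes "directed_pseudo_metric d"
  shows "directed_pseudo_metric (alphaT (gammaT d))
    \<and> (\<forall>X1 X2. alphaT (gammaT d) X1 X2 \<le> d X1 X2)
    \<and> join_preserving_fst (alphaT (gammaT d))
    \<and> (\<forall>d'. directed_pseudo_metric d' \<and> (\<forall>X1 X2. d' X1 X2 \<le> d X1 X2)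
            \<and> join_preserving_fst d'
          \<longrightarrow> (\<forall>X1 X2. d' X1 X2 \<le> alphaT (gammaT d) X1 X2))"
proof (intro conjI allI impI)
  have "0 \<le> d X1 X2" for X1 X2 using assms by (simp add: directed_pseudo_metric_def)
  then show "alphaT (gammaT d) X1 X2 \<le> d X1 X2" for X1 X2 by (rule alphaT_gammaT_le)
  show "directed_pseudo_metric (alphaT (gammaT d))"
    using gammaT_unit_valued by (rule directed_pseudo_metric_alphaT)
  show "join_preserving_fst (alphaT (gammaT d))"
    using gammaT_unit_valued by (rule join_preserving_fst_alphaT)
next
  fix d' :: "'a set \<Rightarrow> 'a set \<Rightarrow> real" and X1 X2
  assume "directed_pseudo_metric d' \<and> (\<forall>X1 X2. d' X1 X2 \<le> d X1 X2) \<and> join_preserving_fst d'"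
  then show "d' X1 X2 \<le> alphaT (gammaT d) X1 X2" by (blast intro: le_alphaT_gammaT)
qed

end
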